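(* Let $p$ be a natural number and $\mathcal{M}=M_2(\mathbb{C})\oplus_\infty\cdots\oplus_\infty M_2(\mathbb{C})$ ($p$ times). Let $\mathbf{x}=(x_1,\dots,x_p)\in\mathcal{M}$ with $x_i=\begin{bmatrix} x^{(i)}_{11} & x^{(i)}_{12}\\ x^{(i)}_{21} & x^{(i)}_{22}\end{bmatrix}$, and let $\mathcal{V}=D_2(\mathbb{C})\oplus\cdots\oplus D_2(\mathbb{C})$ ($p$ times), where $D_2(\mathbb{C})$ is the subspace of diagonal matrices in $M_2(\mathbb{C})$. Then \[ dist(\mathbf{x},\mathcal{V}) = \max\{|x_{12}^{(i)}|,|x_{21}^{(i)}|:~1\leq i \leq p\} \quad \text{and} \quad dist_1(\mathbf{x},\mathcal{V})=\sum_{i=1}^p \big(|x^{(i)}_{21}|+|x^{(i)}_{12}|\big). \]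
   Context: $\mathcal{M}$ carries the $C^*$-norm $\|(z_1,\dots,z_p)\|=\max_i\|z_i\|$ (operator norms), and $dist$ is the distance in this norm. $dist_1$ is the distance with respect to the norm $\|(z_1,\dots,z_p)\|_1=\sum_i Tr(|z_i|)$ (sum of trace norms). *)

theory Defs
  imports "HOL-Analysis.Analysis"
begin

type_synonym cmat2 = "complex ^ 2 ^ 2"

definition opnorm2 :: "cmat2 \<Rightarrow> real" where
  "opnorm2 z = onorm (\<lambda>v::complex^2. z *v v)"

definition adj2 :: "cmat2 \<Rightarrow> cmat2" where
  "adj2 z = (\<chi> i j. cnj (z $ j $ i))"

definition trace2 :: "cmat2 \<Rightarrow> complex" where
  "trace2 z = (\<Sum>i\<in>UNIV. z $ i $ i)"

definition psd2 :: "cmat2 \<Rightarrow> bool" where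
  "psd2 P \<longleftrightarrow> adj2 P = P \<and>
     (\<forall>v::complex^2. Im (\<Sum>i\<in>UNIV. cnj (v $ i) * (P *v v) $ i) = 0
                      \<and> Re (\<Sum>i\<in>UNIV. cnj (v $ i) * (P *v v) $ i) \<ge> 0)"

definition absm2 :: "cmat2 \<Rightarrow> cmat2" where
  "absm2 z = (THE P. psd2 P \<and> P ** P = adj2 z ** z)"

definition tracenorm2 :: "cmat2 \<Rightarrow> real" where
  "tracenorm2 z = Re (trace2 (absm2 z))"

text \<open>Elements of M = M_2(C) (+) ... (+) M_2(C), p summands, are functions on {..<p}.\<close>
definition Mset :: "nat \<Rightarrow> (nat \<Rightarrow> cmat2) set" where
  "Mset p = {x. \<forall>i\<ge>p. x i = 0}"

definition diag2 :: "cmat2 set" where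
  "diag2 = {d. \<forall>i j. i \<noteq> j \<longrightarrow> d $ i $ j = 0}"

definition Vset :: "nat \<Rightarrow> (nat \<Rightarrow> cmat2) set" where
  "Vset p = {v \<in> Mset p. \<forall>i<p. v i \<in> diag2}"

definition Mnorm :: "nat \<Rightarrow> (nat \<Rightarrow> cmat2) \<Rightarrow> real" where
  "Mnorm p x = Max ((\<lambda>i. opnorm2 (x i)) ` {..<p})"

definition Mnorm1 :: "nat \<Rightarrow> (nat \<Rightarrow> cmat2) \<Rightarrow> real" where
  "Mnorm1 p x = (\<Sum>i<p. tracenorm2 (x i))"

definition distM :: "nat \<Rightarrow> (nat \<Rightarrow> cmat2) \<Rightarrow> (nat \<Rightarrow> cmat2) set \<Rightarrow> real" where
  "distM p x S = Inf ((\<lambda>v. Mnorm p (x - v)) ` S)"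

definition distM1 :: "nat \<Rightarrow> (nat \<Rightarrow> cmat2) \<Rightarrow> (nat \<Rightarrow> cmat2) set \<Rightarrow> real" where
  "distM1 p x S = Inf ((\<lambda>v. Mnorm1 p (x - v)) ` S)"

end

theory Submission
  imports Defs
begin

(* Subtracting a diagonal matrix does not change the off-diagonal entries, and deleting the
   diagonal of a 2x2 matrix A does not increase its operator norm or its trace norm.  So the
   distance from x to V is attained at the diagonal part of x and equals the norm of the
   off-diagonal part.  The operator norm of [[0,b],[c,0]] is max(|b|, |c|) by a direct estimate.
   For the trace norm, the positive square root of a positive semidefinite 2x2 matrix H has
   the closed form (H + sqrt(det H) I) / sqrt(tr H + 2 sqrt(det H)), which gives
   tr |A| = sqrt(sum |a_ij|^2 + 2 |det A|) >= |a_12| + |a_21|, with equality when the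
   diagonal of A vanishes. *)

lemma matrix_matrix_mult_2:
  fixes P Q :: "'a::semiring_1^2^2"
  shows "(P ** Q) $ i $ j = P $ i $ 1 * Q $ 1 $ j + P $ i $ 2 * Q $ 2 $ j"
  by (simp add: matrix_matrix_mult_def sum_2)

lemma matrix_2_eq_iff:
  fixes P Q :: "'a^2^2"
  shows "P = Q \<longleftrightarrow> P$1$1 = Q$1$1 \<and> P$1$2 = Q$1$2 \<and> P$2$1 = Q$2$1 \<and> P$2$2 = Q$2$2"
  by (auto simp: vec_eq_iff forall_2)

lemma trace_2:
  fixes P :: "'a::semiring_1^2^2"
  shows "trace P = P$1$1 + P$2$2"
  by (simp add: trace_def sum_2)

lemma trace2_eq_trace: "trace2 = trace"
  by (simp add: fun_eq_iff trace2_def trace_def)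

lemma scaleR_matrix_mult:
  fixes A B :: "'a::real_algebra_1^'n^'n"
  shows "(r *\<^sub>R A) ** (s *\<^sub>R B) = (r * s) *\<^sub>R (A ** B)"
  by (simp add: matrix_matrix_mult_def vec_eq_iff scaleR_sum_right mult.commute)

lemma mat_of_real_mult:
  fixes A :: "'a::real_algebra_1^'n^'n"
  shows "mat (of_real c) ** A = c *\<^sub>R A"
  unfolding matrix_matrix_mult_def mat_def vec_eq_iff vector_scaleR_component
  by (simp add: scaleR_conv_of_real if_distrib[of "\<lambda>x. x * _"] cong: if_cong)

lemma cayley_hamilton_2:
  fixes P :: "'a::comm_ring_1^2^2"
  shows "P ** P + mat (det P) = mat (trace P) ** P"
  by (simp add: matrix_2_eq_iff matrix_matrix_mult_2 det_2 trace_2 mat_def algebra_simps)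

lemma square_add_mat_sqrt_det_2:
  fixes H :: "'a::comm_ring_1^2^2"
  assumes "det H = d ^ 2"
  shows "(H + mat d) ** (H + mat d) = mat (trace H + 2 * d) ** H"
  using assms
  by (simp add: matrix_2_eq_iff matrix_matrix_mult_2 det_2 trace_2 mat_def algebra_simps
      power2_eq_square)

lemma det_add_mat_2:
  fixes H :: "'a::comm_ring_1^2^2"
  shows "det (H + mat d) = det H + d * trace H + d\<^sup>2"
  by (simp add: det_2 trace_2 mat_def algebra_simps power2_eq_square)

lemma det_adj2: "det (adj2 A) = cnj (det A)"
  by (simp add: det_2 adj2_def mult.commute)

lemma hermitian2_iff:
  "adj2 P = P \<longleftrightarrow> Im (P$1$1) = 0 \<and> Im (P$2$2) = 0 \<and> P$2$1 = cnj (P$1$2)"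
  by (auto simp: adj2_def matrix_2_eq_iff complex_eq_iff)

lemma hermitian2_diag_real:
  assumes "adj2 P = P"
  shows "P$1$1 = of_real (Re (P$1$1))" "P$2$2 = of_real (Re (P$2$2))"
  using assms by (simp_all add: hermitian2_iff complex_eq_iff)

lemma det_hermitian2:
  assumes "adj2 P = P"
  shows "det P = of_real (Re (P$1$1) * Re (P$2$2) - (cmod (P$1$2))\<^sup>2)"
proof -
  have "P$2$1 = cnj (P$1$2)" using assms by (simp add: hermitian2_iff)
  then show ?thesis
    using hermitian2_diag_real[OF assms] unfolding cmod_power2
    by (simp add: det_2 complex_mult_cnj)
qed

lemma quadratic_form_hermitian2:
  assumes "adj2 P = P"
  shows "(\<Sum>i\<in>UNIV. cnj (v$i) * (P *v v)$i) =
    of_real (Re (P$1$1) * (cmod (v$1))\<^sup>2 + Re (P$2$2) * (cmod (v$2))\<^sup>2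
             + 2 * Re (cnj (v$1) * P$1$2 * v$2))"
proof -
  have "P$2$1 = cnj (P$1$2)" using assms by (simp add: hermitian2_iff)
  then show ?thesis
    using hermitian2_diag_real[OF assms] unfolding cmod_power2
    by (simp add: sum_2 matrix_vector_mult_def complex_eq_iff algebra_simps power2_eq_square)
qed

lemma binary_quadratic_form_nonneg:
  fixes a b c x y :: real
  assumes "0 \<le> a" "0 \<le> b" "c\<^sup>2 \<le> a * b"
  shows "2 * c * x * y \<le> a * x\<^sup>2 + b * y\<^sup>2"
proof (cases "a = 0")
  case True
  then show ?thesis using assms by simp
next
  case False
  have "0 \<le> (a * x - c * y)\<^sup>2 + (a * b - c\<^sup>2) * y\<^sup>2"
    using assms by simp
  also have "\<dots> = a * (a * x\<^sup>2 + b * y\<^sup>2 - 2 * c * x * y)"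
    by (simp add: algebra_simps power2_eq_square)
  finally show ?thesis
    using False assms(1) by (simp add: zero_le_mult_iff)
qed

lemma hermitian_form2_nonneg_iff:
  fixes a b :: real and g :: complex
  shows "(\<forall>u w. 0 \<le> a * (cmod u)\<^sup>2 + b * (cmod w)\<^sup>2 + 2 * Re (cnj u * g * w))
     \<longleftrightarrow> 0 \<le> a \<and> 0 \<le> b \<and> (cmod g)\<^sup>2 \<le> a * b"
    (is "(\<forall>u w. 0 \<le> ?q u w) \<longleftrightarrow> _")
proof
  assume q: "\<forall>u w. 0 \<le> ?q u w"
  have a: "0 \<le> a" using q[rule_format, of 1 0] by simp
  moreover have "0 \<le> b" using q[rule_format, of 0 1] by simp
  moreover have "(cmod g)\<^sup>2 \<le> a * b"
  proof (cases "a = 0")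
    case False
    have "?q g (- of_real a) = a * (a * b - (cmod g)\<^sup>2)"
      unfolding cmod_power2 by (simp add: algebra_simps power2_eq_square)
    then have "0 \<le> a * (a * b - (cmod g)\<^sup>2)" using q by metis
    then show ?thesis using a False by (simp add: zero_le_mult_iff)
  next
    case True
    have "g = 0"
    proof (rule ccontr)
      assume "g \<noteq> 0"
      define r where "r = (b + 1) / (2 * (cmod g)\<^sup>2)"
      have "?q (- of_real r * g) 1 = b - 2 * r * (cmod g)\<^sup>2"
        using True unfolding cmod_power2 by (simp add: algebra_simps power2_eq_square)
      also have "\<dots> = -1" using \<open>g \<noteq> 0\<close> by (simp add: r_def field_simps)
      finally show False using q by (metis neg_0_le_iff_le not_one_le_zero)
    qed
    then show ?thesis using True by simp
  qed
  ultimately show "0 \<le> a \<and> 0 \<le> b \<and> (cmod g)\<^sup>2 \<le> a * b" by blast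
next
  assume abg: "0 \<le> a \<and> 0 \<le> b \<and> (cmod g)\<^sup>2 \<le> a * b"
  show "\<forall>u w. 0 \<le> ?q u w"
  proof (intro allI)
    fix u w
    have "- Re (cnj u * g * w) \<le> cmod (cnj u * g * w)"
      using abs_Re_le_cmod by (metis abs_le_D2)
    also have "\<dots> = cmod g * cmod u * cmod w"
      by (simp add: norm_mult)
    finally have "- Re (cnj u * g * w) \<le> cmod g * cmod u * cmod w" .
    moreover have "2 * cmod g * cmod u * cmod w \<le> a * (cmod u)\<^sup>2 + b * (cmod w)\<^sup>2"
      using abg by (intro binary_quadratic_form_nonneg) auto
    ultimately show "0 \<le> ?q u w" by linarith
  qed
qed

lemma all_vec_2_iff: "(\<forall>v::complex^2. Q (v$1) (v$2)) \<longleftrightarrow> (\<forall>u w. Q u w)"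
  by (metis vector_2)

lemma psd2_iff:
  "psd2 P \<longleftrightarrow> adj2 P = P \<and> 0 \<le> Re (P$1$1) \<and> 0 \<le> Re (P$2$2) \<and> 0 \<le> Re (det P)"
proof (cases "adj2 P = P")
  case True
  show ?thesis
    unfolding psd2_def quadratic_form_hermitian2[OF True] det_hermitian2[OF True]
      Re_complex_of_real Im_complex_of_real
    using True all_vec_2_iff[where Q = "\<lambda>u w. 0 \<le> Re (P$1$1) * (cmod u)\<^sup>2 + Re (P$2$2) * (cmod w)\<^sup>2
                                     + 2 * Re (cnj u * P$1$2 * w)"]
      hermitian_form2_nonneg_iff[of "Re (P$1$1)" "Re (P$2$2)" "P$1$2"]
    by (simp only: simp_thms diff_ge_0_iff_ge)
qed (simp add: psd2_def)

lemma psd2_trace_eq_0: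
  assumes "psd2 H" "Re (trace H) = 0"
  shows "H = 0"
proof -
  have herm: "adj2 H = H" and "0 \<le> Re (H$1$1)" "0 \<le> Re (H$2$2)" "0 \<le> Re (det H)"
    using assms(1) by (simp_all add: psd2_iff)
  then have "Re (H$1$1) = 0" "Re (H$2$2) = 0"
    using assms(2) by (simp_all add: trace_2)
  moreover from this have "H$1$2 = 0"
    using \<open>0 \<le> Re (det H)\<close> by (simp add: det_hermitian2[OF herm])
  ultimately show ?thesis
    using hermitian2_diag_real[OF herm] herm[unfolded hermitian2_iff]
    by (simp add: matrix_2_eq_iff)
qed

lemma psd2_adj2_mult_self: "psd2 (adj2 A ** A)"
proof -
  have "adj2 (adj2 A ** A) = adj2 A ** A"
    by (simp add: matrix_2_eq_iff matrix_matrix_mult_2 adj2_def mult.commute)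
  moreover have "Re ((adj2 A ** A) $ j $ j) = (cmod (A$1$j))\<^sup>2 + (cmod (A$2$j))\<^sup>2" for j
    unfolding cmod_power2 by (simp add: matrix_matrix_mult_2 adj2_def power2_eq_square)
  moreover have "Re (det (adj2 A ** A)) = (cmod (det A))\<^sup>2"
    unfolding det_mul det_adj2 cmod_power2 by (simp add: power2_eq_square)
  ultimately show ?thesis
    by (simp add: psd2_iff)
qed

(* If P is positive semidefinite with P ** P = H, Cayley-Hamilton gives H + (det P) I = (tr P) P,
   where det P = sqrt (det H) and (tr P)^2 = tr H + 2 det P.  For H = 0 the junk value 1 / 0 = 0
   still yields the right answer. *)
definition sqrt_psd2 :: "cmat2 \<Rightarrow> cmat2" where
  "sqrt_psd2 H = (let d = sqrt (Re (det H))
                  in (1 / sqrt (Re (trace H) + 2 * d)) *\<^sub>R (H + mat (of_real d)))"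

lemma sqrt_psd2_unique:
  assumes "psd2 P"
  shows "sqrt_psd2 (P ** P) = P"
proof -
  define s where "s = Re (trace P)"
  define \<delta> where "\<delta> = Re (det P)"
  have herm: "adj2 P = P" and "0 \<le> Re (P$1$1)" "0 \<le> Re (P$2$2)" and "0 \<le> \<delta>"
    using assms by (simp_all add: psd2_iff \<delta>_def)
  then have s: "0 \<le> s" "trace P = of_real s"
    using hermitian2_diag_real[OF herm] by (simp_all add: s_def trace_2 complex_eq_iff)
  have det: "det P = of_real \<delta>"
    by (simp add: \<delta>_def det_hermitian2[OF herm])
  have CH: "P ** P + mat (of_real \<delta>) = s *\<^sub>R P"
    using cayley_hamilton_2[of P] by (simp add: det s mat_of_real_mult)
  have "sqrt (Re (det (P ** P))) = \<delta>"
    using \<open>0 \<le> \<delta>\<close> by (simp add: det_mul det)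
  moreover have "Re (trace (P ** P)) + 2 * \<delta> = s\<^sup>2"
    using arg_cong[OF CH, of "\<lambda>M. Re (trace M)"]
    by (simp add: trace_2 mat_def s_def power2_eq_square algebra_simps)
  ultimately have "sqrt_psd2 (P ** P) = (1 / s) *\<^sub>R (s *\<^sub>R P)"
    using s by (simp add: sqrt_psd2_def Let_def CH)
  also have "\<dots> = P"
    using psd2_trace_eq_0[OF assms] by (cases "s = 0") (simp_all add: s_def)
  finally show ?thesis .
qed

lemma sqrt_psd2_square:
  assumes "psd2 H"
  shows "sqrt_psd2 H ** sqrt_psd2 H = H"
proof -
  define d where "d = sqrt (Re (det H))"
  define t where "t = sqrt (Re (trace H) + 2 * d)"
  have herm: "adj2 H = H" and "0 \<le> Re (H$1$1)" "0 \<le> Re (H$2$2)" "0 \<le> Re (det H)"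
    using assms by (simp_all add: psd2_iff)
  then have "0 \<le> Re (trace H)" "0 \<le> d" and tr: "trace H = of_real (Re (trace H))"
    using hermitian2_diag_real[OF herm] by (simp_all add: d_def trace_2 complex_eq_iff)
  have det: "det H = (of_real d)\<^sup>2"
    using \<open>0 \<le> Re (det H)\<close> by (simp add: d_def det_hermitian2[OF herm] flip: of_real_power)
  have t2: "t\<^sup>2 = Re (trace H) + 2 * d"
    using \<open>0 \<le> Re (trace H)\<close> \<open>0 \<le> d\<close> by (simp add: t_def)
  have sqrt_H: "sqrt_psd2 H = (1 / t) *\<^sub>R (H + mat (of_real d))"
    by (simp add: sqrt_psd2_def Let_def d_def t_def)
  show ?thesis
  proof (cases "t = 0")
    case True
    then have "H = 0"
      using t2 \<open>0 \<le> Re (trace H)\<close> \<open>0 \<le> d\<close> by (intro psd2_trace_eq_0[OF assms]) simp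
    then show ?thesis using sqrt_H True by simp
  next
    case False
    have "sqrt_psd2 H ** sqrt_psd2 H
          = (1 / t * (1 / t)) *\<^sub>R (mat (trace H + 2 * of_real d) ** H)"
      by (simp add: sqrt_H scaleR_matrix_mult square_add_mat_sqrt_det_2[OF det])
    also have "trace H + 2 * of_real d = of_real (t\<^sup>2)"
      by (subst tr) (simp add: t2)
    finally show ?thesis
      using False by (simp add: mat_of_real_mult power2_eq_square del: of_real_power of_real_mult)
  qed
qed

lemma psd2_sqrt_psd2:
  assumes "psd2 H"
  shows "psd2 (sqrt_psd2 H)"
proof -
  define d where "d = sqrt (Re (det H))"
  define t where "t = sqrt (Re (trace H) + 2 * d)"
  define S where "S = sqrt_psd2 H"
  have herm: "adj2 H = H" and "0 \<le> Re (H$1$1)" "0 \<le> Re (H$2$2)" "0 \<le> Re (det H)"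
    using assms by (simp_all add: psd2_iff)
  then have "0 \<le> d" "0 \<le> t"
    by (simp_all add: d_def t_def trace_2)
  have S_nth: "S $ i $ j = of_real (1 / t) * (H + mat (of_real d)) $ i $ j" for i j
    unfolding S_def sqrt_psd2_def Let_def vector_scaleR_component
    by (simp add: d_def t_def scaleR_conv_of_real)
  have "Re (det (H + mat (of_real d))) = Re (det H) + d * Re (trace H) + d\<^sup>2"
    by (simp add: det_add_mat_2 power2_eq_square)
  then have "0 \<le> Re (det (H + mat (of_real d)))"
    using \<open>0 \<le> d\<close> \<open>0 \<le> Re (H$1$1)\<close> \<open>0 \<le> Re (H$2$2)\<close> \<open>0 \<le> Re (det H)\<close>
    by (simp add: trace_2)
  moreover have "det S = of_real ((1 / t)\<^sup>2) * det (H + mat (of_real d))"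
    by (simp add: det_2 S_nth algebra_simps power2_eq_square)
  ultimately have "0 \<le> Re (det S)"
    by simp
  moreover have "adj2 S = S"
    using herm by (simp add: hermitian2_iff S_nth mat_def)
  ultimately show ?thesis
    using \<open>0 \<le> d\<close> \<open>0 \<le> t\<close> \<open>0 \<le> Re (H$1$1)\<close> \<open>0 \<le> Re (H$2$2)\<close>
    by (simp add: S_def[symmetric] psd2_iff S_nth mat_def)
qed

lemma Re_trace_sqrt_psd2:
  assumes "0 \<le> Re (trace H) + 2 * sqrt (Re (det H))"
  shows "Re (trace (sqrt_psd2 H)) = sqrt (Re (trace H) + 2 * sqrt (Re (det H)))"
proof -
  have "Re (trace (sqrt_psd2 H))
        = (Re (trace H) + 2 * sqrt (Re (det H))) / sqrt (Re (trace H) + 2 * sqrt (Re (det H)))"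
    unfolding sqrt_psd2_def Let_def trace_2 vector_scaleR_component
    by (simp add: mat_def add_divide_distrib)
  with assms show ?thesis
    by (metis real_div_sqrt)
qed

lemma absm2_eq_sqrt_psd2: "absm2 A = sqrt_psd2 (adj2 A ** A)"
  unfolding absm2_def
proof (rule the_equality)
  show "psd2 (sqrt_psd2 (adj2 A ** A))
        \<and> sqrt_psd2 (adj2 A ** A) ** sqrt_psd2 (adj2 A ** A) = adj2 A ** A"
    using psd2_sqrt_psd2 sqrt_psd2_square psd2_adj2_mult_self by blast
  show "P = sqrt_psd2 (adj2 A ** A)" if "psd2 P \<and> P ** P = adj2 A ** A" for P
    using that sqrt_psd2_unique by metis
qed

lemma tracenorm2_eq:
  "tracenorm2 A = sqrt ((cmod (A$1$1))\<^sup>2 + (cmod (A$1$2))\<^sup>2 + (cmod (A$2$1))\<^sup>2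
                        + (cmod (A$2$2))\<^sup>2 + 2 * cmod (det A))"
proof -
  have "Re (trace (adj2 A ** A))
        = (cmod (A$1$1))\<^sup>2 + (cmod (A$1$2))\<^sup>2 + (cmod (A$2$1))\<^sup>2 + (cmod (A$2$2))\<^sup>2"
    unfolding cmod_power2 by (simp add: trace_2 matrix_matrix_mult_2 adj2_def power2_eq_square)
  moreover have "sqrt (Re (det (adj2 A ** A))) = cmod (det A)"
    unfolding det_mul det_adj2 by (simp add: complex_mult_cnj cmod_def mult.commute)
  ultimately show ?thesis
    unfolding tracenorm2_def trace2_eq_trace absm2_eq_sqrt_psd2
    by (simp add: Re_trace_sqrt_psd2)
qed

definition offdiag2 :: "cmat2 \<Rightarrow> cmat2" where
  "offdiag2 A = (\<chi> i j. if i = j then 0 else A $ i $ j)"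

lemma offdiag2_zero: "offdiag2 0 = 0"
  by (simp add: offdiag2_def vec_eq_iff)

lemma det_offdiag2: "det (offdiag2 A) = - (A$1$2 * A$2$1)"
  by (simp add: det_2 offdiag2_def)

lemma tracenorm2_offdiag2: "tracenorm2 (offdiag2 A) = cmod (A$2$1) + cmod (A$1$2)"
proof -
  have "tracenorm2 (offdiag2 A) = sqrt ((cmod (A$2$1) + cmod (A$1$2))\<^sup>2)"
    unfolding tracenorm2_eq det_offdiag2
    by (simp add: offdiag2_def norm_mult power2_eq_square algebra_simps)
  then show ?thesis by simp
qed

lemma tracenorm2_offdiag2_le: "tracenorm2 (offdiag2 A) \<le> tracenorm2 A"
proof -
  have "cmod (A$1$2 * A$2$1) \<le> cmod (det A) + cmod (A$1$1 * A$2$2)"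
    using norm_triangle_ineq4[of "A$1$1 * A$2$2" "det A"] by (simp add: det_2 add.commute)
  moreover have "2 * cmod (A$1$1) * cmod (A$2$2) \<le> (cmod (A$1$1))\<^sup>2 + (cmod (A$2$2))\<^sup>2"
    by (rule sum_squares_bound)
  ultimately have "(cmod (A$2$1) + cmod (A$1$2))\<^sup>2 \<le>
      (cmod (A$1$1))\<^sup>2 + (cmod (A$1$2))\<^sup>2 + (cmod (A$2$1))\<^sup>2 + (cmod (A$2$2))\<^sup>2
      + 2 * cmod (det A)"
    by (simp add: power2_sum norm_mult algebra_simps)
  then show ?thesis
    unfolding tracenorm2_offdiag2 by (subst tracenorm2_eq) (rule real_le_rsqrt)
qed

lemma norm_vec_2: "norm (v :: complex^2) = sqrt ((cmod (v$1))\<^sup>2 + (cmod (v$2))\<^sup>2)"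
  by (simp add: norm_vec_def L2_set_def sum_2)

lemma cmod_entry_le_opnorm2: "cmod (A $ i $ j) \<le> opnorm2 A"
proof -
  have "cmod (A $ i $ j) = cmod ((A *v axis j 1) $ i)"
    by (simp add: matrix_vector_mult_def axis_def if_distrib cong: if_cong)
  also have "\<dots> \<le> norm (A *v axis j 1)"
    by (rule Finite_Cartesian_Product.norm_nth_le)
  also have "\<dots> \<le> opnorm2 A * norm (axis j (1::complex))"
    unfolding opnorm2_def by (rule onorm) simp
  also have "norm (axis j (1::complex)) = 1"
    using exhaust_2[of j] by (auto simp: norm_vec_2 axis_def)
  finally show ?thesis by simp
qed

lemma opnorm2_offdiag2: "opnorm2 (offdiag2 A) = max (cmod (A$1$2)) (cmod (A$2$1))"
proof (rule antisym)
  define m where "m = max (cmod (A$1$2)) (cmod (A$2$1))"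
  have "0 \<le> m" by (simp add: m_def le_max_iff_disj)
  show "opnorm2 (offdiag2 A) \<le> m"
    unfolding opnorm2_def
  proof (rule onorm_le)
    fix v :: "complex^2"
    have "(cmod ((offdiag2 A *v v)$1))\<^sup>2 + (cmod ((offdiag2 A *v v)$2))\<^sup>2
          = (cmod (A$1$2))\<^sup>2 * (cmod (v$2))\<^sup>2 + (cmod (A$2$1))\<^sup>2 * (cmod (v$1))\<^sup>2"
      by (simp add: offdiag2_def matrix_vector_mult_def sum_2 norm_mult power_mult_distrib)
    also have "\<dots> \<le> m\<^sup>2 * (cmod (v$2))\<^sup>2 + m\<^sup>2 * (cmod (v$1))\<^sup>2"
      unfolding m_def by (intro add_mono mult_right_mono power_mono) auto
    finally have "norm (offdiag2 A *v v) \<le> sqrt (m\<^sup>2 * (norm v)\<^sup>2)"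
      unfolding norm_vec_2 by (simp add: algebra_simps)
    then show "norm (offdiag2 A *v v) \<le> m * norm v"
      using \<open>0 \<le> m\<close> by (simp add: real_sqrt_mult)
  qed
  show "m \<le> opnorm2 (offdiag2 A)"
    using cmod_entry_le_opnorm2[of "offdiag2 A" 1 2] cmod_entry_le_opnorm2[of "offdiag2 A" 2 1]
    by (simp add: m_def offdiag2_def)
qed

lemma opnorm2_offdiag2_le: "opnorm2 (offdiag2 A) \<le> opnorm2 A"
  unfolding opnorm2_offdiag2 using cmod_entry_le_opnorm2 by simp

lemma offdiag2_diff_diag2: "D \<in> diag2 \<Longrightarrow> offdiag2 (A - D) = offdiag2 A"
  by (simp add: offdiag2_def diag2_def vec_eq_iff)

lemma diff_offdiag2_in_diag2: "A - offdiag2 A \<in> diag2"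
  by (simp add: offdiag2_def diag2_def)

lemma Inf_norm_diff_Vset:
  fixes N :: "(nat \<Rightarrow> cmat2) \<Rightarrow> real"
  assumes "x \<in> Mset p" and N_offdiag2_le: "\<And>y. N (\<lambda>i. offdiag2 (y i)) \<le> N y"
  shows "Inf ((\<lambda>v. N (x - v)) ` Vset p) = N (\<lambda>i. offdiag2 (x i))"
proof (rule cInf_eq_minimum)
  show "N (\<lambda>i. offdiag2 (x i)) \<in> (\<lambda>v. N (x - v)) ` Vset p"
  proof (rule rev_image_eqI)
    show "(\<lambda>i. x i - offdiag2 (x i)) \<in> Vset p"
      using assms(1) diff_offdiag2_in_diag2 by (simp add: Vset_def Mset_def offdiag2_zero)
    show "N (\<lambda>i. offdiag2 (x i)) = N (x - (\<lambda>i. x i - offdiag2 (x i)))"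
      by (simp add: fun_diff_def)
  qed
next
  fix r assume "r \<in> (\<lambda>v. N (x - v)) ` Vset p"
  then obtain v where v: "v \<in> Vset p" and r: "r = N (x - v)" by blast
  have "v i \<in> diag2" for i
    using v unfolding Vset_def Mset_def by (cases "i < p") (simp_all add: diag2_def)
  then have "(\<lambda>i. offdiag2 ((x - v) i)) = (\<lambda>i. offdiag2 (x i))"
    by (simp add: offdiag2_diff_diag2)
  then show "N (\<lambda>i. offdiag2 (x i)) \<le> r"
    using N_offdiag2_le[of "x - v"] r by simp
qed

lemma Mnorm_offdiag2_le: "Mnorm p (\<lambda>i. offdiag2 (y i)) \<le> Mnorm p y"
proof (cases "p = 0")
  case False
  then show ?thesis
    unfolding Mnorm_def
    by (intro Max.boundedI) (auto intro: order_trans[OF opnorm2_offdiag2_le] Max_ge)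
qed (simp add: Mnorm_def)

lemma Mnorm1_offdiag2_le: "Mnorm1 p (\<lambda>i. offdiag2 (y i)) \<le> Mnorm1 p y"
  unfolding Mnorm1_def by (intro sum_mono tracenorm2_offdiag2_le)

lemma Max_image_max:
  fixes f g :: "'a \<Rightarrow> 'b::linorder"
  assumes "finite I" "I \<noteq> {}"
  shows "Max ((\<lambda>i. max (f i) (g i)) ` I) = Max (f ` I \<union> g ` I)"
proof -
  have "Max ((\<lambda>i. max (f i) (g i)) ` I) = max (Max (f ` I)) (Max (g ` I))"
    using assms
    by (induction I rule: finite_ne_induct) (simp_all add: max.assoc max.left_commute max.commute)
  then show ?thesis
    using assms by (simp add: Max_Un)
qed

theorem corollary4p1:
  fixes p :: nat and x :: "nat \<Rightarrow> cmat2"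
  assumes "p \<ge> 1" and "x \<in> Mset p"
  shows "distM p x (Vset p) =
           Max ((\<lambda>i. cmod (x i $ 1 $ 2)) ` {..<p} \<union> (\<lambda>i. cmod (x i $ 2 $ 1)) ` {..<p})
       \<and> distM1 p x (Vset p) = (\<Sum>i<p. cmod (x i $ 2 $ 1) + cmod (x i $ 1 $ 2))"
proof
  have "distM p x (Vset p) = Mnorm p (\<lambda>i. offdiag2 (x i))"
    unfolding distM_def using assms(2) Mnorm_offdiag2_le by (rule Inf_norm_diff_Vset)
  also have "\<dots> = Max ((\<lambda>i. cmod (x i $ 1 $ 2)) ` {..<p} \<union> (\<lambda>i. cmod (x i $ 2 $ 1)) ` {..<p})"
    unfolding Mnorm_def opnorm2_offdiag2
    using assms(1) by (intro Max_image_max) (auto simp: lessThan_empty_iff)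
  finally show "distM p x (Vset p) = \<dots>" .
  have "distM1 p x (Vset p) = Mnorm1 p (\<lambda>i. offdiag2 (x i))"
    unfolding distM1_def using assms(2) Mnorm1_offdiag2_le by (rule Inf_norm_diff_Vset)
  also have "\<dots> = (\<Sum>i<p. cmod (x i $ 2 $ 1) + cmod (x i $ 1 $ 2))"
    unfolding Mnorm1_def tracenorm2_offdiag2 ..
  finally show "distM1 p x (Vset p) = \<dots>" .
qed

end
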